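(* Let $X$, $Z$ be topological vector spaces, $C\subseteq Z$ a nonempty closed convex cone with $C^-\neq\{0\}$, and $f:X\to\mathcal{F}(Z,C)$. If $f$ is upper lattice-semicontinuous at $x_0\in{\rm dom\,} f$, then there exists a neighborhood $U$ of $x_0$ such that $f$ is lattice-bounded above on $U$.
   Context: $\mathcal{F}(Z,C)=\{A\subseteq Z\colon A=\operatorname{cl}(A+C)\}$ (empty set included); $C^-=\{z^*\in Z^*\colon z^*(z)\le0\ \forall z\in C\}$; ${\rm dom\,} f=\{x\colon f(x)\neq\emptyset\}$. $f$ is upper lattice-semicontinuous at $x_0$ iff $f(x_0)\subseteq\operatorname{cl}\bigcup_{U\in\mathcal{N}(x_0)}\bigcap_{x\in U}f(x)$, where $\mathcal{N}(x_0)$ is the system of neighborhoods of $x_0$; equivalently, for every $z_0\in f(x_0)$ and every neighborhood $V$ of $z_0$ there exist $U\in\mathcal{N}(x_0)$ and $z\in V$ with $z\in f(x)$ for all $x\in U$. $f$ is lattice-bounded above on $M\subseteq X$ iff there is $a\in Z$ with $a\in f(x)$ for all $x\in M$. *)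

theory Defs
  imports "HOL-Analysis.Analysis"
begin

class topological_real_vector = real_vector + topological_space +
  assumes tvs_continuous_add: "\<And>x y W. open W \<Longrightarrow> x + y \<in> W \<Longrightarrow>
      \<exists>U V. open U \<and> open V \<and> x \<in> U \<and> y \<in> V \<and> (\<forall>u\<in>U. \<forall>v\<in>V. u + v \<in> W)"
  assumes tvs_continuous_scaleR: "\<And>a x W. open W \<Longrightarrow> a *\<^sub>R x \<in> W \<Longrightarrow>
      \<exists>e>0. \<exists>V. open V \<and> x \<in> V \<and> (\<forall>b. \<bar>b - a\<bar> < e \<longrightarrow> (\<forall>v\<in>V. b *\<^sub>R v \<in> W))"

definition msum :: "'a::real_vector set \<Rightarrow> 'a set \<Rightarrow> 'a set" where
  "msum A B = {a + b | a b. a \<in> A \<and> b \<in> B}"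

definition FZC :: "'a::topological_real_vector set \<Rightarrow> 'a set set" where
  "FZC C = {A. A = closure (msum A C)}"

definition neg_dual_cone :: "'a::topological_real_vector set \<Rightarrow> ('a \<Rightarrow> real) set" where
  "neg_dual_cone C = {g. linear g \<and> continuous_on UNIV g \<and> (\<forall>z\<in>C. g z \<le> 0)}"

definition setdom :: "('a \<Rightarrow> 'b set) \<Rightarrow> 'a set" where
  "setdom f = {x. f x \<noteq> {}}"

definition nbhds :: "'a::topological_space \<Rightarrow> 'a set set" where
  "nbhds x0 = {U. \<exists>V. open V \<and> x0 \<in> V \<and> V \<subseteq> U}"

definition upper_lattice_semicontinuous_at :: "('a::topological_space \<Rightarrow> 'b::topological_space set) \<Rightarrow> 'a \<Rightarrow> bool" where
  "upper_lattice_semicontinuous_at f x0 \<longleftrightarrow>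
     f x0 \<subseteq> closure (\<Union>U\<in>nbhds x0. \<Inter>x\<in>U. f x)"

definition lattice_bounded_above_on :: "('a \<Rightarrow> 'b set) \<Rightarrow> 'a set \<Rightarrow> bool" where
  "lattice_bounded_above_on f M \<longleftrightarrow> (\<exists>a. \<forall>x\<in>M. a \<in> f x)"

end

theory Submission
  imports Defs
begin

text \<open>Only the nonemptiness of \<open>f x0\<close> and the semicontinuity are needed: a nonempty set lies in
  the closure of \<open>\<Union>U\<in>nbhds x0. \<Inter>x\<in>U. f x\<close> only if that union is nonempty, and any point
  of it is a common upper bound of \<open>f\<close> on some neighbourhood.\<close>

lemma upper_lattice_semicontinuous_at_imp_common_element:
  assumes "f x0 \<noteq> {}" and "upper_lattice_semicontinuous_at f x0"
  obtains U a where "U \<in> nbhds x0" and "\<forall>x\<in>U. a \<in> f x"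
proof -
  have "closure (\<Union>U\<in>nbhds x0. \<Inter>x\<in>U. f x) \<noteq> {}"
    using assms unfolding upper_lattice_semicontinuous_at_def by (metis bot.extremum_uniqueI)
  then have "(\<Union>U\<in>nbhds x0. \<Inter>x\<in>U. f x) \<noteq> {}"
    by (metis closure_empty)
  then obtain U a where "U \<in> nbhds x0" and "a \<in> (\<Inter>x\<in>U. f x)"
    by (metis UN_E ex_in_conv)
  then show thesis
    using that by (metis INT_E)
qed

theorem mainTheorem6:
  fixes f :: "'x::topological_real_vector \<Rightarrow> 'z::topological_real_vector set"
    and C :: "'z set" and x0 :: 'x
  assumes "C \<noteq> {}" and "closed C" and "convex C" and "cone C"
    and "neg_dual_cone C \<noteq> {(\<lambda>_. 0)}"
    and "\<forall>x. f x \<in> FZC C"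
    and "x0 \<in> setdom f"
    and "upper_lattice_semicontinuous_at f x0"
  shows "\<exists>U\<in>nbhds x0. lattice_bounded_above_on f U"
proof -
  have "f x0 \<noteq> {}"
    using \<open>x0 \<in> setdom f\<close> by (simp add: setdom_def)
  then obtain U a where "U \<in> nbhds x0" and "\<forall>x\<in>U. a \<in> f x"
    using \<open>upper_lattice_semicontinuous_at f x0\<close>
    by (rule upper_lattice_semicontinuous_at_imp_common_element)
  then show ?thesis
    unfolding lattice_bounded_above_on_def by auto
qed

end
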